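(* Let $(p_k)$, $q$, $\mathbf Q$ and $(\phi_{n+1},\psi_{n+1})_{n\ge0}$ be as in the context. There exists a constant $C_\psi$ depending only on $(p_k)_{k\ge0}$ such that for all $n\ge0$ and $k\ge0$, $\mathbf Q[\psi_{n+1}=k]\le C_\psi\,k\,q^k$. In particular $\sup_{i\ge1}E_{\mathbf Q}[\psi_i]<\infty$.
   Context: $(p_k)_{k\ge0}$ is a probability distribution on $\{0,1,\dots\}$ with generating function $\mathbf f$, $p_0>0$ and $\mathbf f'(1)\in(1,\infty)$; $q\in(0,1)$ is its extinction probability ($\mathbf f(q)=q$). $\mathbf Q$ is the law of a Galton–Watson tree with offspring distribution $q_k=p_kq^{k-1}$, $k\ge0$ (a subcritical law with mean $\mathbf f'(q)<1$); under $\mathbf Q$, $Z_n$ is the number of vertices in generation $n$ and $H=\max\{n:Z_n>0\}$. On an enlarged probability space (still denoted $\mathbf Q$), $(\phi_{n+1},\psi_{n+1})_{n\ge0}$ are independent pairs of random variables with $\mathbf Q[\phi_{n+1}=j,\psi_{n+1}=k]=c_nq_k\mathbf Q[Z_n=0]^{j-1}\mathbf Q[Z_{n+1}=0]^{k-j}$ for $1\le j\le k$, $k\ge1$, where $c_n=\mathbf Q[H=n]/\mathbf Q[H=n+1]$. *)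

theory Defs
  imports "HOL-Probability.Probability"
begin

definition gen_fun :: "nat pmf \<Rightarrow> real \<Rightarrow> real" where
  "gen_fun p s = (\<Sum>k. pmf p k * s ^ k)"

primrec iid_sum :: "nat pmf \<Rightarrow> nat \<Rightarrow> nat pmf" where
  "iid_sum off 0 = return_pmf 0"
| "iid_sum off (Suc z) = bind_pmf off (\<lambda>x. map_pmf (\<lambda>y. x + y) (iid_sum off z))"

text \<open>Law of the pair (Z_n, Z_(n+1)) of generation sizes of a Galton--Watson tree
  with offspring law off, started from one ancestor.\<close>
primrec gw_Z :: "nat pmf \<Rightarrow> nat \<Rightarrow> nat pmf" where
  "gw_Z off 0 = return_pmf 1"
| "gw_Z off (Suc n) = bind_pmf (gw_Z off n) (\<lambda>z. iid_sum off z)"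

definition gw_pair :: "nat pmf \<Rightarrow> nat \<Rightarrow> (nat \<times> nat) pmf" where
  "gw_pair off n = bind_pmf (gw_Z off n) (\<lambda>z. map_pmf (\<lambda>z'. (z, z')) (iid_sum off z))"

definition gw_ext :: "nat pmf \<Rightarrow> nat \<Rightarrow> real" where
  "gw_ext off n = pmf (gw_Z off n) 0"

text \<open>Q[H = n] = Q[Z_n > 0, Z_(n+1) = 0], with H the height of the tree.\<close>
definition gw_height :: "nat pmf \<Rightarrow> nat \<Rightarrow> real" where
  "gw_height off n = measure_pmf.prob (gw_pair off n) {(a, b). a > 0 \<and> b = 0}"

text \<open>The conditioned (subcritical) offspring law q_k = p_k q^(k-1).\<close>
definition tilted :: "nat pmf \<Rightarrow> real \<Rightarrow> nat pmf" where
  "tilted p q = embed_pmf (\<lambda>k. pmf p k * q ^ k / q)"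

text \<open>Joint law of (phi_(n+1), psi_(n+1)) under Q, as given by the paper.\<close>
definition phipsi_law :: "nat pmf \<Rightarrow> real \<Rightarrow> nat \<Rightarrow> nat \<Rightarrow> nat \<Rightarrow> real" where
  "phipsi_law p q n j k =
     (let Qo = tilted p q;
          c = gw_height Qo n / gw_height Qo (Suc n)
      in if 1 \<le> j \<and> j \<le> k
         then c * pmf Qo k * gw_ext Qo n ^ (j - 1) * gw_ext Qo (Suc n) ^ (k - j)
         else 0)"

definition psi_law :: "nat pmf \<Rightarrow> real \<Rightarrow> nat \<Rightarrow> nat \<Rightarrow> real" where
  "psi_law p q n k = (\<Sum>j\<in>{1..k}. phipsi_law p q n j k)"

end

(*
  Let e n = Q[Z_n = 0] for the tilted tree with generating function f, so that e (n+1) = f (e n)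
  and Q[H = n] = e (n+1) - e n.  Choose K >= 1 with q_K > 0 (possible since the mean of p exceeds
  0).  Since e (n+1) >= e 1 = q_0,
    Q[H = n+1] = f (e (n+1)) - f (e n) >= q_K (e (n+1)^K - e n^K) >= q_K q_0^(K-1) Q[H = n],
  so c_n <= 1 / (q_K q_0^(K-1)) uniformly in n.  Each of the k summands of Q[psi_(n+1) = k] is at
  most c_n q_k <= c_n q^(k-1), which gives the first bound; the second follows from summability
  of k^2 q^k.
*)

theory Submission
  imports Defs
begin

text \<open>For \<open>s > 1\<close> the integral may be infinite, and then \<open>pgf M s = 0\<close>; all lemmas restrict
  to \<open>0 \<le> s \<le> 1\<close>.\<close>

definition pgf :: "nat pmf \<Rightarrow> real \<Rightarrow> real" where
  "pgf M s = enn2real (\<integral>\<^sup>+k. ennreal (s ^ k) \<partial>M)"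

lemma nn_integral_power_le_1:
  fixes M :: "nat pmf"
  assumes "0 \<le> s" "s \<le> 1"
  shows "(\<integral>\<^sup>+k. ennreal (s ^ k) \<partial>M) \<le> 1"
proof -
  have "(\<integral>\<^sup>+k. ennreal (s ^ k) \<partial>M) \<le> (\<integral>\<^sup>+k. 1 \<partial>M)"
    using assms by (intro nn_integral_mono) (simp add: power_le_one)
  then show ?thesis by simp
qed

lemma nn_integral_power_eq_pgf:
  fixes M :: "nat pmf"
  assumes "0 \<le> s" "s \<le> 1"
  shows "(\<integral>\<^sup>+k. ennreal (s ^ k) \<partial>M) = ennreal (pgf M s)"
proof -
  have "(\<integral>\<^sup>+k. ennreal (s ^ k) \<partial>M) < \<top>"
    using nn_integral_power_le_1[OF assms] ennreal_one_less_top by (rule le_less_trans)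
  then show ?thesis
    unfolding pgf_def by (simp add: ennreal_enn2real_if)
qed

lemma pgf_nonneg: "0 \<le> pgf M s"
  by (simp add: pgf_def)

lemma pgf_le_1:
  assumes "0 \<le> s" "s \<le> 1"
  shows "pgf M s \<le> 1"
  using nn_integral_power_le_1[OF assms, of M] nn_integral_power_eq_pgf[OF assms, of M]
  by simp

lemma pgf_at_0: "pgf M 0 = pmf M 0"
proof -
  have "(\<lambda>k. ennreal (0 ^ k)) = indicator {0}"
    by (auto simp: indicator_def power_0_left)
  then show ?thesis
    by (simp add: pgf_def emeasure_pmf_single)
qed

lemma nn_integral_power_iid_sum:
  assumes "0 \<le> s"
  shows "(\<integral>\<^sup>+m. ennreal (s ^ m) \<partial>iid_sum M z) = (\<integral>\<^sup>+k. ennreal (s ^ k) \<partial>M) ^ z"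
proof (induction z)
  case (Suc z)
  have "(\<integral>\<^sup>+m. ennreal (s ^ m) \<partial>iid_sum M (Suc z))
      = (\<integral>\<^sup>+x. ennreal (s ^ x) * (\<integral>\<^sup>+y. ennreal (s ^ y) \<partial>iid_sum M z) \<partial>M)"
    using assms by (simp add: power_add ennreal_mult nn_integral_cmult)
  then show ?case
    by (simp add: Suc nn_integral_multc)
qed simp

lemma pgf_iid_sum:
  assumes "0 \<le> s" "s \<le> 1"
  shows "pgf (iid_sum M z) s = pgf M s ^ z"
proof -
  have "pgf (iid_sum M z) s = enn2real ((\<integral>\<^sup>+k. ennreal (s ^ k) \<partial>M) ^ z)"
    unfolding pgf_def nn_integral_power_iid_sum [OF assms(1)] ..
  then show ?thesis
    by (simp add: nn_integral_power_eq_pgf [OF assms] ennreal_power pgf_nonneg)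
qed

lemma pgf_gw_Z:
  assumes "0 \<le> s" "s \<le> 1"
  shows "pgf (gw_Z M n) s = (pgf M ^^ n) s"
  using assms
proof (induction n arbitrary: s)
  case 0
  then show ?case by (simp add: pgf_def)
next
  case (Suc n)
  have "pgf (gw_Z M (Suc n)) s
      = enn2real (\<integral>\<^sup>+z. \<integral>\<^sup>+m. ennreal (s ^ m) \<partial>iid_sum M z \<partial>gw_Z M n)"
    by (simp add: pgf_def)
  also have "\<dots> = enn2real (\<integral>\<^sup>+z. ennreal (pgf M s ^ z) \<partial>gw_Z M n)"
    using Suc.prems by (simp add: nn_integral_power_eq_pgf pgf_iid_sum)
  also have "\<dots> = pgf (gw_Z M n) (pgf M s)"
    by (simp add: pgf_def)
  also have "\<dots> = (pgf M ^^ Suc n) s"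
    using Suc.prems by (simp add: Suc.IH pgf_nonneg pgf_le_1 funpow_Suc_right del: funpow.simps)
  finally show ?case .
qed

lemma gw_ext_eq_funpow: "gw_ext M n = (pgf M ^^ n) 0"
  by (simp add: gw_ext_def pgf_at_0 [symmetric] pgf_gw_Z)

lemma gw_ext_Suc: "gw_ext M (Suc n) = pgf M (gw_ext M n)"
  by (simp add: gw_ext_eq_funpow)

lemma map_fst_gw_pair: "map_pmf fst (gw_pair M n) = gw_Z M n"
  by (simp add: gw_pair_def map_bind_pmf pmf.map_comp o_def bind_return_pmf')

lemma map_snd_gw_pair: "map_pmf snd (gw_pair M n) = gw_Z M (Suc n)"
  by (simp add: gw_pair_def map_bind_pmf pmf.map_comp o_def)

lemma set_gw_pair_extinct: "(0, b) \<in> set_pmf (gw_pair M n) \<Longrightarrow> b = 0"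
  by (auto simp: gw_pair_def)

lemma gw_height_eq_diff: "gw_height M n = gw_ext M (Suc n) - gw_ext M n"
proof -
  let ?P = "measure_pmf.prob (gw_pair M n)"
  let ?dead = "{(a, b). a = (0::nat) \<and> b = (0::nat)}"
  have split: "{(a, b). b = 0} = {(a, b). a > 0 \<and> b = 0} \<union> ?dead"
    by auto
  have "?dead \<inter> set_pmf (gw_pair M n) = {(a, b). a = 0} \<inter> set_pmf (gw_pair M n)"
    using set_gw_pair_extinct by auto
  then have dead: "?P ?dead = ?P {(a, b). a = 0}"
    by (metis measure_Int_set_pmf)
  have "gw_ext M (Suc n) = ?P (snd -` {0})"
    unfolding gw_ext_def measure_pmf_single [symmetric] map_snd_gw_pair [symmetric] by simp
  also have "snd -` {0} = {(a, b). b = (0::nat)}"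
    by auto
  also have "?P \<dots> = gw_height M n + ?P ?dead"
    unfolding split gw_height_def by (rule measure_pmf.finite_measure_Union) auto
  also have "?P ?dead = ?P (fst -` {0})"
    unfolding dead by (rule arg_cong [where f = ?P]) auto
  also have "\<dots> = gw_ext M n"
    unfolding gw_ext_def measure_pmf_single [symmetric] map_fst_gw_pair [symmetric] by simp
  finally show ?thesis by simp
qed

lemma gw_height_nonneg: "0 \<le> gw_height M n"
  by (simp add: gw_height_def)

lemma gw_ext_nonneg: "0 \<le> gw_ext M n"
  by (simp add: gw_ext_def)

lemma gw_ext_le_1: "gw_ext M n \<le> 1"
  by (simp add: gw_ext_def pmf_le_1)

lemma gw_ext_le_Suc: "gw_ext M n \<le> gw_ext M (Suc n)"
  using gw_height_eq_diff [of M n] gw_height_nonneg [of M n] by simp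

lemma pmf_0_le_gw_ext: "pmf M 0 \<le> gw_ext M (Suc n)"
proof -
  have "gw_ext M (Suc 0) \<le> gw_ext M (Suc n)"
    by (rule lift_Suc_mono_le [of "gw_ext M"]) (auto intro: gw_ext_le_Suc)
  moreover have "gw_ext M (Suc 0) = pmf M 0"
    by (simp add: gw_ext_eq_funpow pgf_at_0)
  ultimately show ?thesis
    by simp
qed

lemma pgf_diff_ge:
  assumes "0 \<le> y" "y \<le> x" "x \<le> 1"
  shows "pmf M K * (x ^ K - y ^ K) \<le> pgf M x - pgf M y"
proof -
  have "ennreal (pgf M y) + ennreal (x ^ K - y ^ K) * ennreal (pmf M K)
      = (\<integral>\<^sup>+k. ennreal (y ^ k) + ennreal (x ^ K - y ^ K) * indicator {K} k \<partial>M)"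
    using assms by (simp add: nn_integral_add nn_integral_cmult emeasure_pmf_single
        nn_integral_power_eq_pgf)
  also have "\<dots> \<le> (\<integral>\<^sup>+k. ennreal (x ^ k) \<partial>M)"
  proof (rule nn_integral_mono)
    fix k
    show "ennreal (y ^ k) + ennreal (x ^ K - y ^ K) * indicator {K} k \<le> ennreal (x ^ k)"
      using assms by (cases "k = K") (simp_all add: ennreal_plus [symmetric] power_mono)
  qed
  also have "\<dots> = ennreal (pgf M x)"
    using assms by (simp add: nn_integral_power_eq_pgf)
  finally have "ennreal (pgf M y + (x ^ K - y ^ K) * pmf M K) \<le> ennreal (pgf M x)"
    using assms by (simp add: ennreal_plus ennreal_mult pgf_nonneg power_mono)
  then show ?thesis
    by (simp add: ennreal_le_iff pgf_nonneg mult.commute)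
qed

lemma power_diff_ge:
  fixes x y :: real
  assumes "0 \<le> y" "y \<le> x" "1 \<le> K"
  shows "x ^ (K - 1) * (x - y) \<le> x ^ K - y ^ K"
proof -
  obtain L where K: "K = Suc L"
    using assms by (cases K) auto
  have "y * y ^ L \<le> y * x ^ L"
    using assms by (intro mult_left_mono power_mono) auto
  then show ?thesis
    unfolding K by (simp add: algebra_simps)
qed

lemma gw_height_growth:
  assumes "1 \<le> K"
  shows "pmf M K * pmf M 0 ^ (K - 1) * gw_height M n \<le> gw_height M (Suc n)"
proof -
  let ?e = "gw_ext M"
  have mono: "?e n \<le> ?e (Suc n)"
    by (rule gw_ext_le_Suc)
  have "pmf M K * pmf M 0 ^ (K - 1) * gw_height M n
      = pmf M K * (pmf M 0 ^ (K - 1) * (?e (Suc n) - ?e n))"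
    by (simp add: gw_height_eq_diff)
  also have "\<dots> \<le> pmf M K * (?e (Suc n) ^ (K - 1) * (?e (Suc n) - ?e n))"
    using mono pmf_0_le_gw_ext by (intro mult_left_mono mult_right_mono power_mono) auto
  also have "\<dots> \<le> pmf M K * (?e (Suc n) ^ K - ?e n ^ K)"
    using mono assms by (intro mult_left_mono power_diff_ge) (auto simp: gw_ext_nonneg)
  also have "\<dots> \<le> pgf M (?e (Suc n)) - pgf M (?e n)"
    using mono by (intro pgf_diff_ge) (auto simp: gw_ext_nonneg gw_ext_le_1)
  also have "\<dots> = gw_height M (Suc n)"
    by (simp add: gw_height_eq_diff gw_ext_Suc)
  finally show ?thesis .
qed

lemma summable_pmf_nat: "summable (pmf (p :: nat pmf))"
  using pmf_abs_summable [of p UNIV] by (simp add: abs_summable_on_nat_iff')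

lemma pmf_tilted:
  assumes "0 < q" "q \<le> 1" "gen_fun p q = q"
  shows "pmf (tilted p q) k = pmf p k * q ^ k / q"
  unfolding tilted_def
proof (rule pmf_embed_pmf)
  have summable: "summable (\<lambda>k. pmf p k * q ^ k)"
    by (rule summable_comparison_test [OF _ summable_pmf_nat])
       (use assms in \<open>auto intro!: exI [of _ 0] mult_left_le simp: power_le_one\<close>)
  show "0 \<le> pmf p k * q ^ k / q" for k
    using assms by simp
  have "(\<integral>\<^sup>+k. ennreal (pmf p k * q ^ k / q) \<partial>count_space UNIV) = ennreal (\<Sum>k. pmf p k * q ^ k / q)"
    using assms summable
    by (simp add: nn_integral_count_space_nat suminf_ennreal2 summable_divide)
  also have "(\<Sum>k. pmf p k * q ^ k / q) = 1"
    using assms summable by (simp add: suminf_divide gen_fun_def)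
  finally show "(\<integral>\<^sup>+k. ennreal (pmf p k * q ^ k / q) \<partial>count_space UNIV) = 1"
    by simp
qed

lemma phipsi_law_bounds:
  fixes p :: "nat pmf" and q :: real
  defines "Q \<equiv> tilted p q"
  shows "0 \<le> phipsi_law p q n j k"
    and "phipsi_law p q n j k \<le> gw_height Q n / gw_height Q (Suc n) * pmf Q k"
proof -
  let ?c = "gw_height Q n / gw_height Q (Suc n)"
  let ?t = "gw_ext Q n ^ (j - 1) * gw_ext Q (Suc n) ^ (k - j)"
  have c: "0 \<le> ?c"
    by (simp add: gw_height_nonneg)
  have t: "0 \<le> ?t" "?t \<le> 1"
    by (simp_all add: gw_ext_nonneg gw_ext_le_1 power_le_one mult_le_one)
  have "phipsi_law p q n j k = (if 1 \<le> j \<and> j \<le> k then ?c * pmf Q k * ?t else 0)"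
    by (simp only: phipsi_law_def Q_def Let_def mult.assoc)
  moreover have cp: "0 \<le> ?c * pmf Q k"
    by (intro mult_nonneg_nonneg c pmf_nonneg)
  moreover have "?c * pmf Q k * ?t \<le> ?c * pmf Q k"
    by (rule mult_left_le [OF t(2) cp])
  moreover have "0 \<le> ?c * pmf Q k * ?t"
    by (rule mult_nonneg_nonneg [OF cp t(1)])
  ultimately show "0 \<le> phipsi_law p q n j k" "phipsi_law p q n j k \<le> ?c * pmf Q k"
    by auto
qed

lemma psi_law_nonneg: "0 \<le> psi_law p q n k"
  unfolding psi_law_def by (intro sum_nonneg phipsi_law_bounds(1))

lemma psi_law_le:
  fixes p :: "nat pmf" and q :: real
  defines "Q \<equiv> tilted p q"
  shows "psi_law p q n k \<le> real k * (gw_height Q n / gw_height Q (Suc n)) * pmf Q k"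
proof -
  have "psi_law p q n k \<le> real (card {1..k}) * (gw_height Q n / gw_height Q (Suc n) * pmf Q k)"
    unfolding psi_law_def Q_def by (rule sum_bounded_above) (rule phipsi_law_bounds(2))
  then show ?thesis
    by simp
qed

lemma psi_law_le_geometric:
  assumes p0: "0 < pmf p 0" and K: "1 \<le> K" "0 < pmf p K"
    and q: "0 < q" "q \<le> 1" "gen_fun p q = q"
  shows "\<exists>C. \<forall>n k. psi_law p q n k \<le> C * real k * q ^ k"
proof (intro exI allI)
  fix n k
  define Q where "Q = tilted p q"
  define m where "m = pmf Q K * pmf Q 0 ^ (K - 1)"
  have m: "0 < m"
    using p0 K q by (simp add: m_def Q_def pmf_tilted)
  have "m * gw_height Q n \<le> gw_height Q (Suc n)"
    unfolding m_def by (rule gw_height_growth [OF K(1)])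
  then have ratio: "gw_height Q n / gw_height Q (Suc n) \<le> 1 / m"
  proof (cases "gw_height Q n = 0")
    case False
    with gw_height_nonneg [of Q n] have "0 < gw_height Q n"
      by simp
    moreover assume growth: "m * gw_height Q n \<le> gw_height Q (Suc n)"
    ultimately have "0 < gw_height Q (Suc n)"
      using m by (smt (verit) mult_pos_pos)
    with growth m show ?thesis
      by (simp add: field_simps)
  qed (use m in simp)
  have pmf_Q: "pmf Q k \<le> q ^ k / q"
    using q pmf_le_1 [of p k] by (simp add: Q_def pmf_tilted divide_right_mono mult_left_le_one_le)
  have "psi_law p q n k \<le> real k * (gw_height Q n / gw_height Q (Suc n)) * pmf Q k"
    unfolding Q_def by (rule psi_law_le)
  also have "\<dots> \<le> real k * (1 / m) * (q ^ k / q)"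
    using ratio pmf_Q m by (intro mult_mono mult_left_mono) (auto simp: gw_height_nonneg)
  also have "\<dots> = 1 / (m * q) * real k * q ^ k"
    by simp
  finally show "psi_law p q n k \<le> 1 / (m * q) * real k * q ^ k" .
qed

lemma summable_square_mult_power:
  fixes x :: real
  assumes "\<bar>x\<bar> < 1"
  shows "summable (\<lambda>k. real k ^ 2 * x ^ k)"
proof -
  have "summable (\<lambda>k. diffs (diffs (\<lambda>_. 1)) k * \<bar>x\<bar> ^ k)"
  proof (rule termdiff_converges [where K = 1])
    fix y :: real
    assume "norm y < 1"
    then show "summable (\<lambda>k. diffs (\<lambda>_. 1) k * y ^ k)"
      by (intro termdiff_converges [where K = 1]) (simp_all add: summable_geometric)
  qed (use assms in simp)
  then have majorant: "summable (\<lambda>k. real (Suc k) * real (Suc (Suc k)) * \<bar>x\<bar> ^ k)"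
    by (simp add: diffs_def)
  have square_le: "real k ^ 2 \<le> real (Suc k) * real (Suc (Suc k))" for k
    by (simp only: power2_eq_square of_nat_mult [symmetric] of_nat_le_iff) (intro mult_le_mono; simp)
  show ?thesis
  proof (rule summable_comparison_test [OF _ majorant])
    show "\<exists>N. \<forall>k\<ge>N. norm (real k ^ 2 * x ^ k) \<le> real (Suc k) * real (Suc (Suc k)) * \<bar>x\<bar> ^ k"
      using square_le by (auto intro!: exI [of _ 0] mult_right_mono simp: abs_mult power_abs)
  qed
qed

lemma first_moment_bound_uniform:
  fixes f :: "nat \<Rightarrow> nat \<Rightarrow> real"
  assumes q: "0 \<le> q" "q < 1"
    and nonneg: "\<And>n k. 0 \<le> f n k" and bound: "\<And>n k. f n k \<le> C * real k * q ^ k"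
  shows "\<exists>B. \<forall>n. summable (\<lambda>k. real k * f n k) \<and> (\<Sum>k. real k * f n k) \<le> B"
proof (intro exI allI conjI)
  fix n
  have dominated: "real k * f n k \<le> C * (real k ^ 2 * q ^ k)" for k
    using mult_left_mono [OF bound [of n k], of "real k"]
    by (simp add: power2_eq_square algebra_simps)
  have majorant: "summable (\<lambda>k. C * (real k ^ 2 * q ^ k))"
    using q by (intro summable_mult summable_square_mult_power) simp
  show summable: "summable (\<lambda>k. real k * f n k)"
    by (rule summable_comparison_test [OF _ majorant]) (use dominated nonneg in simp)
  show "(\<Sum>k. real k * f n k) \<le> (\<Sum>k. C * (real k ^ 2 * q ^ k))"
    by (rule suminf_le [OF dominated summable majorant])
qed

lemma mean_pos_imp_pmf_pos:
  assumes "0 < (\<Sum>k. real k * pmf p k)"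
  obtains K where "1 \<le> K" "0 < pmf p K"
proof -
  have "\<exists>K. real K * pmf p K \<noteq> 0"
  proof (rule ccontr)
    assume "\<nexists>K. real K * pmf p K \<noteq> 0"
    then have "(\<lambda>k. real k * pmf p k) = (\<lambda>_. 0)"
      by auto
    with assms show False
      by simp
  qed
  then obtain K where "real K * pmf p K \<noteq> 0" ..
  then show ?thesis
    using that [of K] pmf_nonneg [of p K] by (cases K) auto
qed

theorem lemma1:
  fixes p :: "nat pmf" and q :: real
  assumes p0: "pmf p 0 > 0"
    and mean_fin: "summable (\<lambda>k. real k * pmf p k)"
    and supercrit: "(\<Sum>k. real k * pmf p k) > 1"
    and q_bounds: "0 < q" "q < 1"
    and q_fix: "gen_fun p q = q"
  shows "(\<exists>C::real. \<forall>n k. psi_law p q n k \<le> C * real k * q ^ k)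
       \<and> (\<exists>B::real. \<forall>n. summable (\<lambda>k. real k * psi_law p q n k)
                      \<and> (\<Sum>k. real k * psi_law p q n k) \<le> B)"
proof -
  have "0 < (\<Sum>k. real k * pmf p k)"
    using supercrit by simp
  then obtain K where "1 \<le> K" "0 < pmf p K"
    by (rule mean_pos_imp_pmf_pos)
  then obtain C where C: "\<forall>n k. psi_law p q n k \<le> C * real k * q ^ k"
    using psi_law_le_geometric p0 q_bounds q_fix by (metis less_imp_le)
  moreover have "\<exists>B. \<forall>n. summable (\<lambda>k. real k * psi_law p q n k)
                      \<and> (\<Sum>k. real k * psi_law p q n k) \<le> B"
    using q_bounds C psi_law_nonneg by (intro first_moment_bound_uniform) auto
  ultimately show ?thesis
    by blast
qed

end
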